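(* Let $Q\in\mathbb{Z}[x_1,\dots,x_n]$ be an integral form with $\alpha_Q>2$. Then $q^{1-n}|V_\lambda(q)|\lesssim1$ uniformly in integers $q\ge1$ and $\lambda\in\mathbb{Z}$.
   Context: $e(t)=e^{2\pi it}$, $Z_q=\mathbb{Z}/q\mathbb{Z}$, $U_q=Z_q^*$ ($U_1=Z_1=\{0\}$). $V_\lambda(q)=\{s\in Z_q^n: Q(s)\equiv\lambda\ (\mathrm{mod}\ q)\}$. $F_q(a,\mathbf{a})=q^{-n}\sum_{s\in Z_q^n}e(Q(s)a/q+s\cdot\mathbf{a}/q)$ and $\alpha_Q=\sup\{\beta\ge0:\ \sup_{q\ge1}\sup_{a\in U_q,\ \mathbf{a}\in Z_q^n}q^\beta|F_q(a,\mathbf{a})|<\infty\}$. *)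

theory Defs
  imports "HOL-Analysis.Analysis" "HOL-Library.Extended_Real"
begin

text \<open>Points of Z^n are modelled as functions nat => int, only the coordinates
  i < n being relevant.  A monomial is an exponent vector nat => nat.\<close>

text \<open>Q is identified with its evaluation map.\<close>
definition integral_form :: "nat \<Rightarrow> ((nat \<Rightarrow> int) \<Rightarrow> int) \<Rightarrow> bool" where
  "integral_form n Q \<longleftrightarrow>
     (\<exists>(d::nat) (M::(nat \<Rightarrow> nat) set) (c::(nat \<Rightarrow> nat) \<Rightarrow> int).
        finite M \<and>
        (\<forall>m\<in>M. (\<Sum>i<n. m i) = d \<and> (\<forall>i\<ge>n. m i = 0)) \<and>
        (\<forall>x. Q x = (\<Sum>m\<in>M. c m * (\<Prod>i<n. x i ^ m i))))"

definition e :: "real \<Rightarrow> complex" where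
  "e t = exp (2 * of_real pi * \<i> * of_real t)"

text \<open>Z_q^n, represented by the canonical residues 0..q-1 in each coordinate.\<close>
definition Zqn :: "nat \<Rightarrow> nat \<Rightarrow> (nat \<Rightarrow> int) set" where
  "Zqn n q = {s. (\<forall>i<n. 0 \<le> s i \<and> s i < int q) \<and> (\<forall>i\<ge>n. s i = 0)}"

text \<open>U_q = (Z/qZ)^*, as canonical residues; U_1 = {0}.\<close>
definition Uq :: "nat \<Rightarrow> int set" where
  "Uq q = {a. 0 \<le> a \<and> a < int q \<and> coprime a (int q)}"

definition V :: "nat \<Rightarrow> ((nat \<Rightarrow> int) \<Rightarrow> int) \<Rightarrow> int \<Rightarrow> nat \<Rightarrow> (nat \<Rightarrow> int) set" where
  "V n Q lam q = {s \<in> Zqn n q. Q s mod int q = lam mod int q}"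

definition F :: "nat \<Rightarrow> ((nat \<Rightarrow> int) \<Rightarrow> int) \<Rightarrow> nat \<Rightarrow> int \<Rightarrow> (nat \<Rightarrow> int) \<Rightarrow> complex" where
  "F n Q q a av = (1 / of_nat q ^ n) *
     (\<Sum>s\<in>Zqn n q. e (real_of_int (Q s * a) / real q
                        + real_of_int (\<Sum>i<n. s i * av i) / real q))"

definition alpha :: "nat \<Rightarrow> ((nat \<Rightarrow> int) \<Rightarrow> int) \<Rightarrow> ereal" where
  "alpha n Q = Sup (ereal ` {\<beta>::real. \<beta> \<ge> 0 \<and>
      (\<exists>C. \<forall>q\<ge>1. \<forall>a\<in>Uq q. \<forall>av\<in>Zqn n q. real q powr \<beta> * cmod (F n Q q a av) \<le> C)})"

end

theory Submission
  imports Defs "HOL-Number_Theory.Cong"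
begin

text \<open>Orthogonality of additive characters gives
  q |V_lambda(q)| = sum_{a<q} sum_s e((Q(s) - lambda) a / q).  Writing a/q = a'/d in lowest
  terms, the inner sum is q^n e(-lambda a / q) F_d(a', 0), because Q(s) mod d only depends on
  s mod d.  As alpha_Q > 2 there is beta > 2 with |F_d(a', 0)| <= C d^-beta, hence
  q^(1-n) |V_lambda(q)| <= C sum_{a<q} (q / gcd(a, q))^-beta.  A denominator k = q / gcd(a, q)
  arises from at most k residues a, as q divides k a, so the last sum is at most
  sum_k k^(1-beta), which converges because beta > 2.\<close>

lemma e_add: "e (x + y) = e x * e y"
  by (simp add: e_def exp_add[symmetric] algebra_simps)

lemma e_of_int: "e (of_int k) = 1"
proof -
  have "e (of_int k) = exp ((2 * of_int k * pi) * \<i>)"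
    by (simp add: e_def mult_ac)
  also have "\<dots> = 1"
    by (rule exp_integer_2pi) simp
  finally show ?thesis .
qed

lemma norm_e [simp]: "cmod (e t) = 1"
  by (simp add: e_def norm_exp_eq_Re)

lemma e_power: "e t ^ k = e (real k * t)"
  by (simp add: e_def exp_of_nat_mult[symmetric] mult_ac)

lemma e_eq_1_iff: "e t = 1 \<longleftrightarrow> t \<in> \<int>"
proof
  assume "e t = 1"
  then obtain k :: int where "2 * pi * t = of_int (2 * k) * pi"
    by (auto simp: e_def exp_eq_1)
  then show "t \<in> \<int>"
    by simp
qed (auto simp: e_of_int elim: Ints_cases)

lemma e_div_cong:
  assumes "k mod int d = k' mod int d"
  shows "e (of_int k / real d) = e (of_int k' / real d)"
proof (cases "d = 0")
  case False
  obtain j where "k = k' + int d * j"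
    using assms by (metis mod_eq_dvd_iff dvd_def diff_eq_eq add.commute)
  with False have "of_int k / real d = of_int k' / real d + of_int j"
    by (simp add: field_simps)
  then show ?thesis
    by (simp add: e_add e_of_int)
qed (use assms in simp)

lemma sum_e_multiples:
  assumes "q > 0"
  shows "(\<Sum>a<q. e (of_int (k * int a) / real q)) = (if int q dvd k then of_nat q else 0)"
proof (cases "int q dvd k")
  case True
  then obtain j where "k = int q * j" ..
  with assms have "e (of_int (k * int a) / real q) = 1" for a
    using e_of_int[of "j * int a"] by (simp add: field_simps)
  with True show ?thesis
    by simp
next
  case False
  define z where "z = e (of_int k / real q)"
  have z_ne_1: "z \<noteq> 1"
  proof
    assume "z = 1"
    then obtain j where "of_int k / real q = of_int j"
      by (auto simp: z_def e_eq_1_iff elim: Ints_cases)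
    with assms have "k = int q * j"
      by (simp add: field_simps) (metis of_int_eq_iff of_int_mult of_int_of_nat_eq)
    with False show False
      by auto
  qed
  have "z ^ q = 1"
    using assms by (simp add: z_def e_power e_of_int)
  moreover have "(\<Sum>a<q. e (of_int (k * int a) / real q)) = (\<Sum>a<q. z ^ a)"
    by (simp add: z_def e_power field_simps)
  ultimately show ?thesis
    using False z_ne_1 by (simp add: geometric_sum)
qed

lemma Zqn_bij_PiE: "bij_betw (\<lambda>s. restrict s {..<n}) (Zqn n m) (PiE {..<n} (\<lambda>_. {0..<int m}))"
  by (rule bij_betw_byWitness[where f'="\<lambda>f i. if i < n then f i else 0"])
     (auto simp: Zqn_def PiE_def extensional_def fun_eq_iff)

lemma card_Zqn: "card (Zqn n m) = m ^ n"
  using bij_betw_same_card[OF Zqn_bij_PiE] by (simp add: card_PiE)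

lemma finite_Zqn: "finite (Zqn n m)"
  using bij_betw_finite[OF Zqn_bij_PiE] by (simp add: finite_PiE)

lemma int_div_less_if_less_mult:
  fixes s d g :: int
  assumes "0 < d" "s < g * d"
  shows "s div d < g"
proof (rule ccontr)
  assume "\<not> s div d < g"
  then have "g * d \<le> s div d * d"
    using assms(1) by (intro mult_right_mono) auto
  moreover have "s div d * d \<le> s"
    using assms(1) div_mult_mod_eq[of s d] pos_mod_sign[of d s] by linarith
  ultimately show False
    using assms(2) by linarith
qed

lemma int_digit_less:
  fixes t u d g :: int
  assumes "t < d" "u < g" "0 \<le> d"
  shows "t + d * u < g * d"
proof -
  have "d * (u + 1) \<le> d * g"
    using assms by (intro mult_left_mono) auto
  then show ?thesis
    using assms by (simp add: algebra_simps)
qed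

lemma Zqn_mult_bij:
  assumes "d > 0"
  shows "bij_betw (\<lambda>(t, u) i. t i + int d * u i) (Zqn n d \<times> Zqn n g) (Zqn n (g * d))"
proof (rule bij_betw_byWitness[where f'="\<lambda>s. (\<lambda>i. s i mod int d, \<lambda>i. s i div int d)"])
  have digits: "(t i + int d * u i) mod int d = t i" "(t i + int d * u i) div int d = u i"
    if "t \<in> Zqn n d" for t u :: "nat \<Rightarrow> int" and i
    using that assms by (cases "i < n"; simp add: Zqn_def)+
  show "\<forall>p\<in>Zqn n d \<times> Zqn n g.
          (\<lambda>s. (\<lambda>i. s i mod int d, \<lambda>i. s i div int d)) ((\<lambda>(t, u) i. t i + int d * u i) p) = p"
    using digits digits[where u="\<lambda>_. 0"] by (auto simp: fun_eq_iff)
  show "\<forall>s\<in>Zqn n (g * d).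
          (\<lambda>(t, u) i. t i + int d * u i) ((\<lambda>s. (\<lambda>i. s i mod int d, \<lambda>i. s i div int d)) s) = s"
    by (simp add: fun_eq_iff mod_mult_div_eq)
  show "(\<lambda>(t, u) i. t i + int d * u i) ` (Zqn n d \<times> Zqn n g) \<subseteq> Zqn n (g * d)"
    using int_digit_less by (fastforce simp: Zqn_def)
  show "(\<lambda>s. (\<lambda>i. s i mod int d, \<lambda>i. s i div int d)) ` Zqn n (g * d) \<subseteq> Zqn n d \<times> Zqn n g"
    using assms int_div_less_if_less_mult[of "int d"]
    by (auto simp: Zqn_def pos_imp_zdiv_nonneg_iff)
qed

lemma sum_Zqn_mult_periodic:
  fixes h :: "(nat \<Rightarrow> int) \<Rightarrow> 'a :: comm_semiring_1"
  assumes "d > 0"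
    and periodic: "\<And>t u. t \<in> Zqn n d \<Longrightarrow> u \<in> Zqn n g \<Longrightarrow> h (\<lambda>i. t i + int d * u i) = h t"
  shows "(\<Sum>s\<in>Zqn n (g * d). h s) = of_nat (g ^ n) * (\<Sum>t\<in>Zqn n d. h t)"
proof -
  have "(\<Sum>s\<in>Zqn n (g * d). h s) = (\<Sum>(t, u)\<in>Zqn n d \<times> Zqn n g. h (\<lambda>i. t i + int d * u i))"
    using sum.reindex_bij_betw[OF Zqn_mult_bij[OF assms(1)], of h] by (simp add: case_prod_unfold)
  also have "\<dots> = (\<Sum>t\<in>Zqn n d. \<Sum>u\<in>Zqn n g. h (\<lambda>i. t i + int d * u i))"
    by (simp add: sum.cartesian_product split_def)
  also have "\<dots> = (\<Sum>t\<in>Zqn n d. \<Sum>u\<in>Zqn n g. h t)"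
    by (intro sum.cong refl periodic)
  finally show ?thesis
    by (simp add: card_Zqn sum_distrib_left mult.commute)
qed

lemma integral_form_mod_cong:
  assumes "integral_form n Q" "\<forall>i<n. x i mod k = y i mod k"
  shows "Q x mod k = Q y mod k"
proof -
  obtain M c where Q: "\<And>x. Q x = (\<Sum>m\<in>M. c m * (\<Prod>i<n. x i ^ m i))"
    using assms(1) unfolding integral_form_def by blast
  have "[(\<Sum>m\<in>M. c m * (\<Prod>i<n. x i ^ m i)) = (\<Sum>m\<in>M. c m * (\<Prod>i<n. y i ^ m i))] (mod k)"
    using assms(2) by (intro cong_sum cong_mult cong_prod cong_pow cong_refl) (simp add: cong_def)
  then show ?thesis
    by (simp add: Q cong_def)
qed

lemma sum_Zqn_e_eq_F:
  assumes Q: "integral_form n Q" and "q > 0"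
  shows "(\<Sum>s\<in>Zqn n q. e (of_int (Q s * int a) / real q))
           = of_nat q ^ n * F n Q (q div gcd a q) (int (a div gcd a q)) (\<lambda>_. 0)"
proof -
  define g where "g = gcd a q"
  define d where "d = q div g"
  define a' where "a' = a div g"
  have "g > 0" "q = g * d" "a = g * a'"
    using \<open>q > 0\<close> by (simp_all add: g_def d_def a'_def)
  then have "d > 0"
    using \<open>q > 0\<close> by (metis gr0I mult_0_right)
  define h where "h s = e (of_int (Q s * int a') / real d)" for s
  have "of_int (Q s * int a) / real q = of_int (Q s * int a') / real d" for s
    using \<open>g > 0\<close> \<open>d > 0\<close> by (simp add: \<open>q = g * d\<close> \<open>a = g * a'\<close> field_simps)
  then have "(\<Sum>s\<in>Zqn n q. e (of_int (Q s * int a) / real q)) = (\<Sum>s\<in>Zqn n (g * d). h s)"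
    by (simp add: h_def \<open>q = g * d\<close>)
  also have "\<dots> = of_nat (g ^ n) * (\<Sum>t\<in>Zqn n d. h t)"
  proof (rule sum_Zqn_mult_periodic[OF \<open>d > 0\<close>])
    fix t u :: "nat \<Rightarrow> int"
    have "Q (\<lambda>i. t i + int d * u i) mod int d = Q t mod int d"
      by (rule integral_form_mod_cong[OF Q]) simp
    then have "Q (\<lambda>i. t i + int d * u i) * int a' mod int d = Q t * int a' mod int d"
      by (metis mod_mult_left_eq)
    then show "h (\<lambda>i. t i + int d * u i) = h t"
      unfolding h_def by (rule e_div_cong)
  qed
  also have "(\<Sum>t\<in>Zqn n d. h t) = of_nat d ^ n * F n Q d (int a') (\<lambda>_. 0)"
    using \<open>d > 0\<close> by (simp add: F_def h_def)
  finally have "(\<Sum>s\<in>Zqn n q. e (of_int (Q s * int a) / real q))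
                 = of_nat (g * d) ^ n * F n Q d (int a') (\<lambda>_. 0)"
    by (simp add: power_mult_distrib)
  then show ?thesis
    by (simp add: \<open>q = g * d\<close>[symmetric] g_def d_def a'_def)
qed

lemma reduced_numerator_in_Uq:
  assumes "a < q"
  shows "int (a div gcd a q) \<in> Uq (q div gcd a q)"
proof -
  have "gcd a q > 0" "a = gcd a q * (a div gcd a q)" "q = gcd a q * (q div gcd a q)"
    using assms by simp_all
  then have "a div gcd a q < q div gcd a q"
    using assms by (metis mult_less_cancel1)
  moreover have "coprime (a div gcd a q) (q div gcd a q)"
    using assms by (intro div_gcd_coprime) simp
  ultimately show ?thesis
    by (simp add: Uq_def)
qed

lemma card_V_eq_sum_e:
  assumes "q > 0"
  shows "of_nat q * of_nat (card (V n Q lam q)) =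
           (\<Sum>a<q. \<Sum>s\<in>Zqn n q. e (of_int ((Q s - lam) * int a) / real q))"
proof -
  have "(\<Sum>a<q. \<Sum>s\<in>Zqn n q. e (of_int ((Q s - lam) * int a) / real q))
          = (\<Sum>s\<in>Zqn n q. if int q dvd Q s - lam then of_nat q else 0)"
    using assms by (subst sum.swap) (intro sum.cong refl sum_e_multiples)
  also have "\<dots> = (\<Sum>s\<in>{s\<in>Zqn n q. int q dvd Q s - lam}. of_nat q)"
    by (rule sum.inter_filter[symmetric]) (simp add: finite_Zqn)
  also have "{s\<in>Zqn n q. int q dvd Q s - lam} = V n Q lam q"
    by (simp add: V_def mod_eq_dvd_iff)
  finally show ?thesis
    by (simp add: mult.commute)
qed

lemma norm_sum_e_le_of_F_decay:
  assumes Q: "integral_form n Q" and "a < q"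
    and decay: "\<And>d a'. d \<ge> 1 \<Longrightarrow> a' \<in> Uq d \<Longrightarrow> cmod (F n Q d a' (\<lambda>_. 0)) \<le> C * real d powr - \<beta>"
  shows "cmod (\<Sum>s\<in>Zqn n q. e (of_int ((Q s - lam) * int a) / real q))
           \<le> real q ^ n * (C * real (q div gcd a q) powr - \<beta>)"
proof -
  have "q > 0" "q div gcd a q \<ge> 1"
    using \<open>a < q\<close> by (auto simp: Suc_le_eq div_greater_zero_iff gcd_le2_nat)
  have "(\<Sum>s\<in>Zqn n q. e (of_int ((Q s - lam) * int a) / real q))
          = e (- of_int (lam * int a) / real q) * (\<Sum>s\<in>Zqn n q. e (of_int (Q s * int a) / real q))"
    by (simp add: sum_distrib_left e_add[symmetric] algebra_simps diff_divide_distrib)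
  then have "cmod (\<Sum>s\<in>Zqn n q. e (of_int ((Q s - lam) * int a) / real q))
               = real q ^ n * cmod (F n Q (q div gcd a q) (int (a div gcd a q)) (\<lambda>_. 0))"
    using sum_Zqn_e_eq_F[OF Q \<open>q > 0\<close>] by (simp add: norm_mult norm_power)
  also have "\<dots> \<le> real q ^ n * (C * real (q div gcd a q) powr - \<beta>)"
    using decay[OF \<open>q div gcd a q \<ge> 1\<close> reduced_numerator_in_Uq[OF \<open>a < q\<close>]]
    by (intro mult_left_mono) auto
  finally show ?thesis .
qed

lemma card_dvd_mult_le:
  assumes "q > 0" "k > 0"
  shows "card {a\<in>{..<q}. q dvd k * a} \<le> k"
proof -
  have "card {a\<in>{..<q}. q dvd k * a} \<le> card {..<k}"
  proof (rule card_inj_on_le)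
    show "inj_on (\<lambda>a. k * a div q) {a\<in>{..<q}. q dvd k * a}"
      using \<open>k > 0\<close>
      by (intro inj_onI) (metis (no_types, lifting) dvd_div_mult_self mem_Collect_eq mult_left_cancel not_gr0)
    have "k * a div q < k" if "a < q" for a
      using that assms by (simp add: div_less_iff_less_mult mult.commute)
    then show "(\<lambda>a. k * a div q) ` {a\<in>{..<q}. q dvd k * a} \<subseteq> {..<k}"
      by auto
  qed simp
  then show ?thesis
    by simp
qed

lemma sum_denominator_powr_le:
  assumes "q > 0"
  shows "(\<Sum>a<q. real (q div gcd a q) powr - \<beta>) \<le> (\<Sum>k\<in>{1..q}. real k powr (1 - \<beta>))"
proof -
  define f where "f a k = (if q dvd k * a then real k powr - \<beta> else 0)" for a k
  have "real (q div gcd a q) powr - \<beta> \<le> (\<Sum>k\<in>{1..q}. f a k)" for a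
  proof -
    have "(q div gcd a q) * a = q * (a div gcd a q)"
      by (simp add: div_mult_swap mult.commute)
    then have "q dvd (q div gcd a q) * a"
      by simp
    moreover have "q div gcd a q \<in> {1..q}"
      using assms by (auto simp: Suc_le_eq div_greater_zero_iff gcd_le2_nat div_le_dividend)
    ultimately show ?thesis
      using member_le_sum[of "q div gcd a q" "{1..q}" "f a"] by (simp add: f_def)
  qed
  then have "(\<Sum>a<q. real (q div gcd a q) powr - \<beta>) \<le> (\<Sum>a<q. \<Sum>k\<in>{1..q}. f a k)"
    by (intro sum_mono)
  also have "\<dots> = (\<Sum>k\<in>{1..q}. \<Sum>a<q. f a k)"
    by (rule sum.swap)
  also have "\<dots> \<le> (\<Sum>k\<in>{1..q}. real k powr (1 - \<beta>))"
  proof (rule sum_mono)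
    fix k assume k: "k \<in> {1..q}"
    have "(\<Sum>a<q. f a k) = real (card {a\<in>{..<q}. q dvd k * a}) * real k powr - \<beta>"
      by (simp add: f_def sum.If_cases Int_def)
    also have "\<dots> \<le> real k * real k powr - \<beta>"
      using card_dvd_mult_le[OF assms, of k] k by (intro mult_right_mono) auto
    also have "\<dots> = real k powr (1 - \<beta>)"
      using k by (simp add: powr_diff powr_minus divide_inverse)
    finally show "(\<Sum>a<q. f a k) \<le> real k powr (1 - \<beta>)" .
  qed
  finally show ?thesis .
qed

lemma card_V_le_of_F_decay:
  assumes Q: "integral_form n Q" and "\<beta> > 2" and "C \<ge> 0" and "q \<ge> 1"
    and decay: "\<And>d a'. d \<ge> 1 \<Longrightarrow> a' \<in> Uq d \<Longrightarrow> cmod (F n Q d a' (\<lambda>_. 0)) \<le> C * real d powr - \<beta>"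
  shows "real q powr (1 - real n) * real (card (V n Q lam q)) \<le> C * (\<Sum>k. real k powr (1 - \<beta>))"
proof -
  have "q > 0"
    using \<open>q \<ge> 1\<close> by simp
  have "real q * real (card (V n Q lam q))
          = cmod (\<Sum>a<q. \<Sum>s\<in>Zqn n q. e (of_int ((Q s - lam) * int a) / real q))"
    using card_V_eq_sum_e[OF \<open>q > 0\<close>, of n Q lam, symmetric] by (simp add: norm_mult)
  also have "\<dots> \<le> (\<Sum>a<q. cmod (\<Sum>s\<in>Zqn n q. e (of_int ((Q s - lam) * int a) / real q)))"
    by (rule norm_sum)
  also have "\<dots> \<le> (\<Sum>a<q. real q ^ n * (C * real (q div gcd a q) powr - \<beta>))"
    by (intro sum_mono norm_sum_e_le_of_F_decay[OF Q _ decay]) simp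
  also have "\<dots> = real q ^ n * C * (\<Sum>a<q. real (q div gcd a q) powr - \<beta>)"
    by (simp add: sum_distrib_left mult.assoc)
  also have "\<dots> \<le> real q ^ n * C * (\<Sum>k. real k powr (1 - \<beta>))"
  proof (intro mult_left_mono order_trans[OF sum_denominator_powr_le[OF \<open>q > 0\<close>]])
    show "(\<Sum>k\<in>{1..q}. real k powr (1 - \<beta>)) \<le> (\<Sum>k. real k powr (1 - \<beta>))"
      using \<open>\<beta> > 2\<close> by (intro sum_le_suminf) (auto simp: summable_real_powr_iff)
  qed (use \<open>C \<ge> 0\<close> in simp)
  finally have "real q * real (card (V n Q lam q)) \<le> real q ^ n * (C * (\<Sum>k. real k powr (1 - \<beta>)))"
    by (simp add: mult.assoc)
  moreover have "real q powr (1 - real n) = real q / real q ^ n"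
    using \<open>q > 0\<close> by (simp add: powr_diff powr_realpow)
  ultimately show ?thesis
    using \<open>q > 0\<close> by (simp add: divide_le_eq mult.commute)
qed

lemma F_decay_if_less_alpha:
  assumes "ereal \<gamma> < alpha n Q"
  obtains \<beta> C where "\<beta> > \<gamma>" "C \<ge> 0"
    "\<And>q a av. q \<ge> 1 \<Longrightarrow> a \<in> Uq q \<Longrightarrow> av \<in> Zqn n q \<Longrightarrow> cmod (F n Q q a av) \<le> C * real q powr - \<beta>"
proof -
  obtain \<beta> C where "\<beta> > \<gamma>"
    and bound: "\<forall>q\<ge>1. \<forall>a\<in>Uq q. \<forall>av\<in>Zqn n q. real q powr \<beta> * cmod (F n Q q a av) \<le> C"
    using assms unfolding alpha_def less_Sup_iff by auto
  have "cmod (F n Q q a av) \<le> max C 0 * real q powr - \<beta>"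
    if "q \<ge> 1" "a \<in> Uq q" "av \<in> Zqn n q" for q a av
  proof -
    have "real q powr \<beta> * cmod (F n Q q a av) \<le> max C 0"
      using bound that by (simp add: le_max_iff_disj)
    with that show ?thesis
      by (simp add: powr_minus field_simps)
  qed
  with \<open>\<beta> > \<gamma>\<close> show ?thesis
    using that[of \<beta> "max C 0"] by auto
qed

theorem corollary3p3:
  fixes n :: nat and Q :: "(nat \<Rightarrow> int) \<Rightarrow> int"
  assumes "integral_form n Q"
    and "alpha n Q > 2"
  shows "\<exists>C. \<forall>q::nat. \<forall>lam::int. q \<ge> 1 \<longrightarrow>
           real q powr (1 - real n) * real (card (V n Q lam q)) \<le> C"
proof -
  obtain \<beta> C where "\<beta> > 2" "C \<ge> 0"
    and decay: "\<And>q a av. q \<ge> 1 \<Longrightarrow> a \<in> Uq q \<Longrightarrow> av \<in> Zqn n q \<Longrightarrow>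
                  cmod (F n Q q a av) \<le> C * real q powr - \<beta>"
    using F_decay_if_less_alpha[of 2 n Q] assms(2) by auto
  have "(\<lambda>_. 0) \<in> Zqn n d" if "d \<ge> 1" for d
    using that by (simp add: Zqn_def)
  then show ?thesis
    using card_V_le_of_F_decay[OF assms(1) \<open>\<beta> > 2\<close> \<open>C \<ge> 0\<close>] decay by blast
qed

end
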